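(* Let $S_k^*(q,a)=\sum_{1\le\ell\le q,\,(\ell,q)=1}e\left(\frac{a\ell^k}{q}\right)$. For all $q,a\in\mathbb N$ with $(q,a)=1$ we have $|S_2^*(q,a)|\le 8q^{-1/4}\varphi(q)$, and for every integer $k>2$, $$|S_k^*(q,a)|\le C_k q^{-\frac1k}\varphi(q),\qquad C_k=\prod_{p\le k^6}k,$$ the product being over primes $p\le k^6$.
   Context: $e(\alpha)=e^{2\pi i\alpha}$; $\varphi$ is Euler's totient function. *)

theory Defs
  imports "HOL-Analysis.Analysis" "HOL-Number_Theory.Number_Theory"
begin

definition e :: "real \<Rightarrow> complex" where
  "e \<alpha> = exp (2 * pi * \<i> * complex_of_real \<alpha>)"

definition S_star :: "nat \<Rightarrow> nat \<Rightarrow> nat \<Rightarrow> complex" where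
  "S_star k q a = (\<Sum>l\<in>{l\<in>{1..q}. coprime l q}. e (real (a * l ^ k) / real q))"

definition C_const :: "nat \<Rightarrow> real" where
  "C_const k = (\<Prod>p\<in>{p. prime p \<and> p \<le> k ^ 6}. real k)"

end

theory Submission
  imports Defs
begin

(* Summing over the residues 0 <= l < q instead of 1 <= l <= q, the Chinese remainder theorem gives
   S(mn, a) = S(m, a n^(k-1)) S(n, a m^(k-1)) for coprime m and n.  It therefore suffices to show
   |S(p^t, b)| <= c_p p^(-t/k) phi(p^t), where c_p = 1 except for small p: c_p = k for p <= k^6,
   whose product is C_k, and for k = 2, c_p = 8^(1/4) for the four primes p <= 8.
   - If t >= 2 v_p(k) + 2, the substitution l = x + p^s y with 2s >= t makes a l^k / p^t linear in y
     modulo 1, and the sum over y vanishes.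
   - If 2 <= t < 2 v_p(k) + 2, then p^t <= k^3 and the trivial bound phi(p^t) suffices.
   - For t = 1 a second-moment argument gives |S(p, b)|^2 <= k (pk - p + 1): by Parseval,
     sum_b |S(p, b)|^2 counts the pairs with l^k = m^k mod p, every fibre of x -> x^k has at most
     k elements, and |S(p, b)| is the same for the at least (p - 1)/k classes b u^k. *)

lemma e_add: "e (x + y) = e x * e y"
  unfolding e_def by (simp add: exp_add[symmetric] algebra_simps)

lemma norm_e [simp]: "cmod (e x) = 1"
  unfolding e_def by (simp add: norm_exp_eq_Re)

lemma cnj_e: "cnj (e x) = e (- x)"
  unfolding e_def exp_cnj by simp

lemma e_eq_1_iff: "e x = 1 \<longleftrightarrow> x \<in> \<int>"
proof
  assume "e x = 1"
  then obtain n :: int where "2 * pi * x = of_int (2 * n) * pi"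
    unfolding e_def exp_eq_1 by auto
  then show "x \<in> \<int>" by simp
next
  assume "x \<in> \<int>"
  then obtain n :: int where "x = of_int n" by (auto elim: Ints_cases)
  then show "e x = 1" unfolding e_def exp_eq_1 by (auto intro!: exI[of _ n])
qed

lemma e_0 [simp]: "e 0 = 1"
  by (simp add: e_def)

lemma e_of_int [simp]: "e (of_int n) = 1"
  by (simp add: e_eq_1_iff)

lemma e_of_nat [simp]: "e (of_nat n) = 1"
  by (simp add: e_eq_1_iff)

lemma e_of_nat_mult: "e (of_nat n * x) = e x ^ n"
  unfolding e_def exp_of_nat_mult[symmetric] by (simp add: algebra_simps)

lemma e_cong:
  assumes "q > 0" "[m = m'] (mod q)"
  shows "e (real m / real q) = e (real m' / real q)"
proof -
  have "e (real n / real q) = e (real (n mod q) / real q)" for n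
  proof -
    have "real n / real q = real (n mod q) / real q + of_nat (n div q)"
      using assms(1) by (simp add: field_simps flip: of_nat_mult of_nat_add)
    then show ?thesis by (simp add: e_add)
  qed
  then show ?thesis using assms(2) unfolding cong_def by metis
qed

lemma sum_e_linear:
  assumes "q > 0" "q dvd N"
  shows "(\<Sum>y<N. e (of_int z * real y / real q)) = (if int q dvd z then of_nat N else 0)"
proof -
  define w where "w = e (of_int z / real q)"
  have pow: "e (of_int z * real y / real q) = w ^ y" for y
    unfolding w_def e_of_nat_mult[symmetric] by (simp add: mult.commute)
  obtain j where "N = q * j" using assms(2) by blast
  then have "w ^ N = e (of_int (int j * z))"
    unfolding w_def e_of_nat_mult[symmetric] using assms(1) by simp
  then have "w ^ N = 1"
    by (simp only: e_of_int)
  moreover have "w = 1 \<longleftrightarrow> int q dvd z"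
  proof -
    have "w = 1 \<longleftrightarrow> (\<exists>n. of_int z / real q = of_int n)"
      unfolding w_def e_eq_1_iff Ints_def by auto
    also have "\<dots> \<longleftrightarrow> (\<exists>n. z = int q * n)"
      using assms(1) by (auto simp: field_simps) (metis of_int_eq_iff of_int_mult of_int_of_nat_eq)
    finally show ?thesis by (auto simp: dvd_def)
  qed
  ultimately show ?thesis
    unfolding pow sum_gp_strict by auto
qed

definition reduced_residues :: "nat \<Rightarrow> nat set" where
  "reduced_residues q = {l. l < q \<and> coprime l q}"

definition red_exp_sum :: "nat \<Rightarrow> nat \<Rightarrow> nat \<Rightarrow> complex" where
  "red_exp_sum k q a = (\<Sum>l\<in>reduced_residues q. e (real (a * l ^ k) / real q))"

lemma finite_reduced_residues [simp]: "finite (reduced_residues q)"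
  unfolding reduced_residues_def by auto

lemma bij_betw_mod_totatives:
  assumes "q \<ge> 1"
  shows "bij_betw (\<lambda>l. l mod q) (totatives q) (reduced_residues q)"
proof (rule bij_betwI[where g = "\<lambda>l. if l = 0 then q else l"])
  show "(\<lambda>l. l mod q) \<in> totatives q \<rightarrow> reduced_residues q"
    using assms by (auto simp: in_totatives_iff reduced_residues_def)
  show "(\<lambda>l. if l = 0 then q else l) \<in> reduced_residues q \<rightarrow> totatives q"
    using assms by (auto simp: in_totatives_iff reduced_residues_def)
  show "(if l mod q = 0 then q else l mod q) = l" if "l \<in> totatives q" for l
    using that by (auto simp: in_totatives_iff le_less)
  show "(if l = 0 then q else l) mod q = l" if "l \<in> reduced_residues q" for l
    using that by (auto simp: reduced_residues_def)
qed

lemma card_reduced_residues: "q \<ge> 1 \<Longrightarrow> card (reduced_residues q) = totient q"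
  unfolding totient_def using bij_betw_same_card[OF bij_betw_mod_totatives] by simp

lemma e_power_cong:
  assumes "q > 0" "[l = l'] (mod q)"
  shows "e (real (a * l ^ k) / real q) = e (real (a * l' ^ k) / real q)"
  using assms by (intro e_cong cong_mult cong_refl cong_pow)

lemma S_star_eq_red_exp_sum:
  assumes "q \<ge> 1"
  shows "S_star k q a = red_exp_sum k q a"
proof -
  have "{l \<in> {1..q}. coprime l q} = totatives q"
    by (auto simp: in_totatives_iff)
  then have "S_star k q a = (\<Sum>l\<in>totatives q. e (real (a * (l mod q) ^ k) / real q))"
    unfolding S_star_def using assms
    by (simp only:) (intro sum.cong refl e_power_cong, auto simp: cong_def)
  also have "\<dots> = red_exp_sum k q a"
    unfolding red_exp_sum_def by (rule sum.reindex_bij_betw[OF bij_betw_mod_totatives[OF assms]])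
  finally show ?thesis .
qed

lemma red_exp_sum_cong:
  assumes "q > 0" "[a = a'] (mod q)"
  shows "red_exp_sum k q a = red_exp_sum k q a'"
  unfolding red_exp_sum_def using assms by (intro sum.cong refl e_cong cong_mult cong_refl)

lemma bij_betw_mult_mod_reduced_residues:
  assumes "q > 0" "coprime u q"
  shows "bij_betw (\<lambda>l. u * l mod q) (reduced_residues q) (reduced_residues q)"
proof -
  have "inj_on (\<lambda>l. u * l mod q) (reduced_residues q)"
  proof
    fix x y assume "x \<in> reduced_residues q" "y \<in> reduced_residues q" "u * x mod q = u * y mod q"
    then show "x = y"
      using assms(2) cong_mult_lcancel_nat cong_less_modulus_unique_nat
      unfolding reduced_residues_def cong_def by blast
  qed
  moreover have "(\<lambda>l. u * l mod q) ` reduced_residues q \<subseteq> reduced_residues q"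
    using assms unfolding reduced_residues_def by auto
  ultimately show ?thesis
    using endo_inj_surj[OF finite_reduced_residues] unfolding bij_betw_def by blast
qed

lemma red_exp_sum_mult_unit_power:
  assumes "q > 0" "coprime u q"
  shows "red_exp_sum k q (a * u ^ k) = red_exp_sum k q a"
proof -
  have "red_exp_sum k q a = (\<Sum>l\<in>reduced_residues q. e (real (a * (u * l mod q) ^ k) / real q))"
    unfolding red_exp_sum_def
    by (rule sum.reindex_bij_betw[OF bij_betw_mult_mod_reduced_residues[OF assms], symmetric])
  also have "\<dots> = red_exp_sum k q (a * u ^ k)"
    unfolding red_exp_sum_def
    by (intro sum.cong refl) (metis assms(1) e_power_cong mod_mod_trivial cong_def
        mult.assoc power_mult_distrib)
  finally show ?thesis ..
qed

lemma red_exp_sum_1 [simp]: "red_exp_sum k 1 a = 1"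
proof -
  have "reduced_residues 1 = {0}" unfolding reduced_residues_def by auto
  then show ?thesis unfolding red_exp_sum_def by (cases k) simp_all
qed

lemma norm_red_exp_sum_le_totient:
  assumes "q \<ge> 1"
  shows "cmod (red_exp_sum k q a) \<le> totient q"
proof -
  have "cmod (red_exp_sum k q a) \<le> (\<Sum>l\<in>reduced_residues q. cmod (e (real (a * l ^ k) / real q)))"
    unfolding red_exp_sum_def by (rule norm_sum)
  then show ?thesis using card_reduced_residues[OF assms] by simp
qed

lemma norm_red_exp_sum_le_trivial:
  assumes "q \<ge> 1" "real q powr \<theta> \<le> c"
  shows "cmod (red_exp_sum k q a) \<le> c * real q powr (- \<theta>) * totient q"
proof -
  have "1 \<le> real q powr \<theta> * real q powr (- \<theta>)"
    using assms(1) by (simp add: powr_minus_divide)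
  also have "\<dots> \<le> c * real q powr (- \<theta>)"
    using assms(2) by (intro mult_right_mono) auto
  finally show ?thesis
    using norm_red_exp_sum_le_totient[OF assms(1)] order_trans mult_right_mono
    by (metis mult_1 of_nat_0_le_iff)
qed

lemma power_add_cong_mult_coprime:
  fixes u w m n :: nat
  assumes "coprime m n" "n dvd u" "m dvd w" "k \<ge> 1"
  shows "[(u + w) ^ k = u ^ k + w ^ k] (mod m * n)"
proof (rule coprime_cong_mult_nat[OF _ _ assms(1)])
  have w: "[w = 0] (mod m)" using assms(3) by (simp add: cong_0_iff)
  have "[(u + w) ^ k = u ^ k] (mod m)"
    using cong_pow[OF cong_add[OF cong_refl[of u] w], of k] by simp
  moreover have "[u ^ k + w ^ k = u ^ k] (mod m)"
    using cong_add[OF cong_refl[of "u ^ k"] cong_pow[OF w, of k]] assms(4) by (simp add: power_0_left)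
  ultimately show "[(u + w) ^ k = u ^ k + w ^ k] (mod m)"
    using cong_sym cong_trans by blast
next
  have u: "[u = 0] (mod n)" using assms(2) by (simp add: cong_0_iff)
  have "[(u + w) ^ k = w ^ k] (mod n)"
    using cong_pow[OF cong_add[OF u cong_refl[of w]], of k] by simp
  moreover have "[u ^ k + w ^ k = w ^ k] (mod n)"
    using cong_add[OF cong_pow[OF u, of k] cong_refl[of "w ^ k"]] assms(4) by (simp add: power_0_left)
  ultimately show "[(u + w) ^ k = u ^ k + w ^ k] (mod n)"
    using cong_sym cong_trans by blast
qed

lemma bij_betw_crt_reduced_residues:
  assumes "coprime m n" "m \<ge> 1" "n \<ge> 1"
  shows "bij_betw (\<lambda>(x, y). (x * n + y * m) mod (m * n))
           (reduced_residues m \<times> reduced_residues n) (reduced_residues (m * n))"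
proof -
  define f where "f = (\<lambda>(x, y). (x * n + y * m) mod (m * n))"
  have mod_m: "[f (x, y) = x * n] (mod m)" and mod_n: "[f (x, y) = y * m] (mod n)" for x y
    unfolding f_def cong_def by (simp_all add: mod_mod_cancel)
  have "f ` (reduced_residues m \<times> reduced_residues n) \<subseteq> reduced_residues (m * n)"
  proof clarify
    fix x y assume "x \<in> reduced_residues m" "y \<in> reduced_residues n"
    then have "coprime (x * n) m" "coprime (y * m) n"
      using assms(1) by (auto simp: reduced_residues_def coprime_commute)
    then have "coprime (f (x, y)) m" "coprime (f (x, y)) n"
      using coprime_cong_cong_left mod_m mod_n by blast+
    then show "f (x, y) \<in> reduced_residues (m * n)"
      using assms(2,3) by (simp add: reduced_residues_def f_def)
  qed
  moreover have "inj_on f (reduced_residues m \<times> reduced_residues n)"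
  proof (rule inj_onI, clarify)
    fix x y x' y'
    assume mem: "x \<in> reduced_residues m" "y \<in> reduced_residues n"
      "x' \<in> reduced_residues m" "y' \<in> reduced_residues n" and eq: "f (x, y) = f (x', y')"
    have "[x * n = x' * n] (mod m)" "[y * m = y' * m] (mod n)"
      using mod_m[of x y] mod_m[of x' y'] mod_n[of x y] mod_n[of x' y'] eq
      by (metis cong_sym cong_trans)+
    then have "[x = x'] (mod m)" "[y = y'] (mod n)"
      using assms(1) by (simp_all add: cong_mult_rcancel_nat coprime_commute)
    then show "x = x' \<and> y = y'"
      using mem cong_less_modulus_unique_nat unfolding reduced_residues_def by blast
  qed
  moreover have "card (reduced_residues m \<times> reduced_residues n) = card (reduced_residues (m * n))"
    using assms by (simp add: card_cartesian_product card_reduced_residues totient_mult_coprime)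
  ultimately show ?thesis
    unfolding f_def[symmetric] bij_betw_def
    by (metis card_image card_subset_eq finite_reduced_residues)
qed

lemma e_power_crt_split:
  assumes "coprime m n" "m \<ge> 1" "n \<ge> 1" "k \<ge> 1"
  shows "e (real (a * ((x * n + y * m) mod (m * n)) ^ k) / real (m * n))
    = e (real (a * n ^ (k - 1) * x ^ k) / real m) * e (real (a * m ^ (k - 1) * y ^ k) / real n)"
proof -
  obtain j where k: "k = Suc j" using assms(4) by (cases k) auto
  have "[((x * n + y * m) mod (m * n)) ^ k = (x * n + y * m) ^ k] (mod m * n)"
    by (intro cong_pow) (simp add: cong_def)
  also have "[(x * n + y * m) ^ k = (x * n) ^ k + (y * m) ^ k] (mod m * n)"
    using assms(1,4) by (intro power_add_cong_mult_coprime) auto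
  finally have "[((x * n + y * m) mod (m * n)) ^ k = (x * n) ^ k + (y * m) ^ k] (mod m * n)" .
  then have "e (real (a * ((x * n + y * m) mod (m * n)) ^ k) / real (m * n))
      = e (real (a * ((x * n) ^ k + (y * m) ^ k)) / real (m * n))"
    using assms(2,3) by (intro e_cong cong_mult cong_refl) auto
  also have "real (a * ((x * n) ^ k + (y * m) ^ k)) / real (m * n)
      = real (a * n ^ (k - 1) * x ^ k) / real m + real (a * m ^ (k - 1) * y ^ k) / real n"
  proof -
    have "a * ((x * n) ^ k + (y * m) ^ k) = a * n ^ (k - 1) * x ^ k * n + a * m ^ (k - 1) * y ^ k * m"
      unfolding k by (simp add: power_mult_distrib algebra_simps)
    then have "real (a * ((x * n) ^ k + (y * m) ^ k))
        = real (a * n ^ (k - 1) * x ^ k) * real n + real (a * m ^ (k - 1) * y ^ k) * real m"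
      by (metis of_nat_add of_nat_mult)
    moreover have "real m > 0" "real n > 0" using assms(2,3) by auto
    ultimately show ?thesis by (simp add: add_divide_distrib)
  qed
  finally show ?thesis by (simp add: e_add)
qed

lemma red_exp_sum_mult_coprime:
  assumes "coprime m n" "m \<ge> 1" "n \<ge> 1" "k \<ge> 1"
  shows "red_exp_sum k (m * n) a = red_exp_sum k m (a * n ^ (k - 1)) * red_exp_sum k n (a * m ^ (k - 1))"
proof -
  have "red_exp_sum k (m * n) a = (\<Sum>z\<in>reduced_residues m \<times> reduced_residues n.
          e (real (a * (case z of (x, y) \<Rightarrow> (x * n + y * m) mod (m * n)) ^ k) / real (m * n)))"
    unfolding red_exp_sum_def
    by (rule sum.reindex_bij_betw[OF bij_betw_crt_reduced_residues[OF assms(1-3)], symmetric])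
  also have "\<dots> = (\<Sum>(x, y)\<in>reduced_residues m \<times> reduced_residues n.
          e (real (a * n ^ (k - 1) * x ^ k) / real m) * e (real (a * m ^ (k - 1) * y ^ k) / real n))"
    by (rule sum.cong[OF refl]) (simp only: e_power_crt_split[OF assms] split_beta fst_conv snd_conv)
  also have "\<dots> = red_exp_sum k m (a * n ^ (k - 1)) * red_exp_sum k n (a * m ^ (k - 1))"
    unfolding red_exp_sum_def sum_product sum.cartesian_product ..
  finally show ?thesis .
qed

lemma power_add_cong_mod_square:
  fixes x c :: nat
  shows "[(x + c) ^ Suc k = x ^ Suc k + Suc k * x ^ k * c] (mod c\<^sup>2)"
proof (induction k)
  case 0
  then show ?case by simp
next
  case (Suc k)
  have "[(x + c) ^ Suc (Suc k) = (x + c) * (x ^ Suc k + Suc k * x ^ k * c)] (mod c\<^sup>2)"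
    using cong_mult[OF cong_refl[of "x + c"] Suc.IH] by simp
  also have "(x + c) * (x ^ Suc k + Suc k * x ^ k * c)
      = x ^ Suc (Suc k) + Suc (Suc k) * x ^ Suc k * c + c\<^sup>2 * (Suc k * x ^ k)"
    by (simp add: algebra_simps power2_eq_square)
  also have "[\<dots> = x ^ Suc (Suc k) + Suc (Suc k) * x ^ Suc k * c] (mod c\<^sup>2)"
    by (simp add: cong_def)
  finally show ?case .
qed

lemma bij_betw_reduced_residues_prime_power:
  assumes "prime p" "s \<ge> 1"
  shows "bij_betw (\<lambda>(x, y). x + p ^ s * y)
           (reduced_residues (p ^ s) \<times> {..<p ^ r}) (reduced_residues (p ^ (s + r)))"
proof (rule bij_betwI[where g = "\<lambda>l. (l mod p ^ s, l div p ^ s)"])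
  have P: "p ^ s > 0" using assms(1) by (simp add: prime_gt_0_nat)
  have coprime_iff: "coprime l (p ^ n) \<longleftrightarrow> coprime l p" if "n \<ge> 1" for l n
    using that by simp
  show "(\<lambda>(x, y). x + p ^ s * y) \<in> reduced_residues (p ^ s) \<times> {..<p ^ r} \<rightarrow> reduced_residues (p ^ (s + r))"
  proof clarify
    fix x y assume x: "x \<in> reduced_residues (p ^ s)" and y: "y < p ^ r"
    have "x + p ^ s * y < p ^ s * (y + 1)"
      using x by (simp add: reduced_residues_def)
    also have "\<dots> \<le> p ^ s * p ^ r"
      using y by (intro mult_le_mono2) simp
    finally have "x + p ^ s * y < p ^ (s + r)" by (simp add: power_add)
    moreover have "[x + p * (p ^ (s - 1) * y) = x] (mod p)"
      by (simp add: cong_def)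
    then have "[x + p ^ s * y = x] (mod p)"
      using assms(2) by (cases s) (simp_all add: mult.assoc)
    then have "coprime (x + p ^ s * y) p"
      using x assms(2) coprime_cong_cong_left coprime_iff by (auto simp: reduced_residues_def)
    ultimately show "x + p ^ s * y \<in> reduced_residues (p ^ (s + r))"
      using assms(2) coprime_iff by (simp add: reduced_residues_def)
  qed
  show "(\<lambda>l. (l mod p ^ s, l div p ^ s)) \<in> reduced_residues (p ^ (s + r)) \<rightarrow> reduced_residues (p ^ s) \<times> {..<p ^ r}"
  proof
    fix l assume "l \<in> reduced_residues (p ^ (s + r))"
    then have "l < p ^ s * p ^ r" and "coprime l (p ^ s)"
      using assms(2) coprime_iff by (auto simp: reduced_residues_def power_add)
    moreover have "coprime (l mod p ^ s) (p ^ s)"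
      using coprime_mod_left_iff[of "p ^ s" l] P \<open>coprime l (p ^ s)\<close> by simp
    ultimately show "(l mod p ^ s, l div p ^ s) \<in> reduced_residues (p ^ s) \<times> {..<p ^ r}"
      using P by (auto simp: reduced_residues_def less_mult_imp_div_less mult.commute)
  qed
  show "(\<lambda>l. (l mod p ^ s, l div p ^ s)) ((\<lambda>(x, y). x + p ^ s * y) z) = z"
    if "z \<in> reduced_residues (p ^ s) \<times> {..<p ^ r}" for z
    using that P by (auto simp: reduced_residues_def)
  show "(\<lambda>(x, y). x + p ^ s * y) (l mod p ^ s, l div p ^ s) = l" for l
    by simp
qed

lemma e_power_shift_prime_power:
  assumes "p > 0" "Suc j = p ^ v * k'" "t = Suc (s + v)" "t \<le> 2 * s"
  shows "e (real (a * (x + p ^ s * y) ^ Suc j) / real (p ^ t))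
    = e (real (a * x ^ Suc j) / real (p ^ t)) * e (of_int (int (a * k' * x ^ j)) * real y / real p)"
proof -
  have "p ^ t dvd p ^ (2 * s)" using assms(4) by (rule le_imp_power_dvd)
  then have "p ^ t dvd (p ^ s * y)\<^sup>2"
    by (simp add: power_mult_distrib power_mult[symmetric] mult.commute[of s])
  then have "[(x + p ^ s * y) ^ Suc j = x ^ Suc j + Suc j * x ^ j * (p ^ s * y)] (mod p ^ t)"
    using power_add_cong_mod_square cong_dvd_modulus_nat by blast
  also have "Suc j * x ^ j * (p ^ s * y) = (k' * x ^ j * y) * p ^ (s + v)"
    unfolding assms(2) by (simp add: power_add mult_ac)
  finally have "[a * (x + p ^ s * y) ^ Suc j = a * (x ^ Suc j + (k' * x ^ j * y) * p ^ (s + v))] (mod p ^ t)"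
    by (rule cong_scalar_left)
  then have "e (real (a * (x + p ^ s * y) ^ Suc j) / real (p ^ t))
      = e (real (a * (x ^ Suc j + (k' * x ^ j * y) * p ^ (s + v))) / real (p ^ t))"
    using assms(1) by (intro e_cong) auto
  also have "real (a * (x ^ Suc j + (k' * x ^ j * y) * p ^ (s + v))) / real (p ^ t)
      = real (a * x ^ Suc j) / real (p ^ t) + of_int (int (a * k' * x ^ j)) * real y / real p"
  proof -
    have "real (a * (x ^ Suc j + (k' * x ^ j * y) * p ^ (s + v)))
        = real (a * x ^ Suc j) + (real (a * k' * x ^ j) * real y) * real p ^ (s + v)"
      by (simp add: algebra_simps)
    moreover have "real (p ^ t) = real p * real p ^ (s + v)" unfolding assms(3) by simp
    ultimately show ?thesis using assms(1) by (simp add: add_divide_distrib)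
  qed
  finally show ?thesis by (simp add: e_add)
qed

lemma red_exp_sum_prime_power_eq_0:
  assumes p: "prime p" and "k \<ge> 1" and "coprime p a"
    and t: "t \<ge> 2 * multiplicity p k + 2"
  shows "red_exp_sum k (p ^ t) a = 0"
proof -
  define v where "v = multiplicity p k"
  obtain k' where k: "k = p ^ v * k'" and k': "\<not> p dvd k'"
    using multiplicity_decompose'[of k p] assms(2) prime_gt_1_nat[OF p] unfolding v_def by auto
  obtain j where j: "k = Suc j" using assms(2) by (cases k) auto
  with k have kj: "Suc j = p ^ v * k'" by simp
  define s where "s = t - v - 1"
  have s: "s \<ge> 1" "t = s + Suc v" "t = Suc (s + v)" "t \<le> 2 * s"
    using t unfolding s_def v_def by auto
  have "red_exp_sum k (p ^ t) a = (\<Sum>z\<in>reduced_residues (p ^ s) \<times> {..<p ^ Suc v}.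
          e (real (a * (case z of (x, y) \<Rightarrow> x + p ^ s * y) ^ k) / real (p ^ t)))"
    unfolding red_exp_sum_def s(2)
    by (rule sum.reindex_bij_betw[OF bij_betw_reduced_residues_prime_power[OF p s(1)], symmetric])
  also have "\<dots> = (\<Sum>x\<in>reduced_residues (p ^ s). e (real (a * x ^ k) / real (p ^ t)) *
          (\<Sum>y<p ^ Suc v. e (of_int (int (a * k' * x ^ j)) * real y / real p)))"
    unfolding sum_distrib_left sum.cartesian_product j
    by (intro sum.cong refl)
      (simp only: e_power_shift_prime_power[OF prime_gt_0_nat[OF p] kj s(3,4)] split_beta fst_conv snd_conv)
  also have "\<dots> = 0"
  proof (intro sum.neutral ballI)
    fix x assume "x \<in> reduced_residues (p ^ s)"
    then have "coprime p x" using s(1) by (simp add: reduced_residues_def ac_simps)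
    moreover have "coprime p k'" using prime_imp_coprime[OF p k'] .
    ultimately have "coprime p (a * k' * x ^ j)" using \<open>coprime p a\<close> by simp
    then have "\<not> p dvd a * k' * x ^ j"
      using coprime_absorb_left[of p "a * k' * x ^ j"] not_prime_unit p by blast
    then have "\<not> int p dvd int (a * k' * x ^ j)" by (metis int_dvd_int_iff)
    moreover have "p > 0" "p dvd p ^ Suc v" using p by (simp_all add: prime_gt_0_nat)
    ultimately show "e (real (a * x ^ k) / real (p ^ t)) *
        (\<Sum>y<p ^ Suc v. e (of_int (int (a * k' * x ^ j)) * real y / real p)) = 0"
      by (simp only: sum_e_linear if_False mult_zero_right)
  qed
  finally show ?thesis .
qed

lemma red_exp_sum_prime_power_cases:
  assumes "prime p" "k \<ge> 1" "coprime p a" "t \<ge> 1"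
  obtains "red_exp_sum k (p ^ t) a = 0" | "p ^ t \<le> k ^ 3" | "t = 1"
proof -
  define v where "v = multiplicity p k"
  consider "t \<ge> 2 * v + 2" | "t = 1" | "2 \<le> t" "t \<le> 2 * v + 1"
    using assms(4) by linarith
  then show ?thesis
  proof cases
    case 1
    then show ?thesis using that red_exp_sum_prime_power_eq_0 assms unfolding v_def by blast
  next
    case 2
    then show ?thesis using that by blast
  next
    case 3
    have "p ^ v dvd k" unfolding v_def by (rule multiplicity_dvd)
    then have pv: "p ^ v \<le> k" using assms(2) by (intro dvd_imp_le) auto
    have "p \<le> p ^ v" using 3 prime_ge_1_nat[OF assms(1)] by (intro self_le_power) auto
    have "p ^ t \<le> p ^ (2 * v + 1)"
      using 3 prime_ge_1_nat[OF assms(1)] by (intro power_increasing) auto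
    also have "\<dots> = p * (p ^ v)\<^sup>2" by (simp add: power_mult[symmetric] mult.commute)
    also have "\<dots> \<le> k * k\<^sup>2"
      using \<open>p \<le> p ^ v\<close> pv by (intro mult_mono power_mono) auto
    finally show ?thesis using that by (simp add: power3_eq_cube power2_eq_square)
  qed
qed

lemma card_roots_of_unity_mod_prime_le:
  fixes p :: nat
  assumes p: "prime p" and "k \<ge> 1"
  shows "card {x. x < p \<and> x ^ k mod p = 1} \<le> k"
proof -
  interpret residues_prime p "residue_ring (int p)" by unfold_locales (rule p)
  let ?R = "residue_ring (int p)"
  have pow: "x [^]\<^bsub>?R\<^esub> k = x ^ k mod int p" if "0 \<le> x" "x < int p" for x
    using pow_cong[of x k] that by simp
  have "int ` {x. x < p \<and> x ^ k mod p = 1} \<subseteq> {x \<in> carrier ?R. x [^]\<^bsub>?R\<^esub> k = \<one>\<^bsub>?R\<^esub>}"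
    by (auto simp: res_carrier_eq res_one_eq pow simp flip: of_nat_power of_nat_mod)
  then have "card (int ` {x. x < p \<and> x ^ k mod p = 1}) \<le> card {x \<in> carrier ?R. x [^]\<^bsub>?R\<^esub> k = \<one>\<^bsub>?R\<^esub>}"
    by (rule card_mono[rotated]) (auto simp: res_carrier_eq intro: finite_subset[of _ "{0..<int p}"])
  also have "\<dots> \<le> k"
    using assms(2) by (intro num_roots_le_deg) (auto simp: res_carrier_eq)
  finally show ?thesis by (simp add: card_image)
qed

lemma card_power_mod_fiber_le:
  assumes p: "prime p" and "k \<ge> 1"
  shows "card {x \<in> reduced_residues p. x ^ k mod p = h} \<le> k"
proof (cases "{x \<in> reduced_residues p. x ^ k mod p = h} = {}")
  case False
  then obtain u where u: "u \<in> reduced_residues p" "u ^ k mod p = h" by auto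
  then obtain v where v: "[u * v = 1] (mod p)"
    using cong_solve_coprime_nat by (auto simp: reduced_residues_def)
  have p1: "p > 1" using p prime_gt_1_nat by blast
  let ?F = "{x \<in> reduced_residues p. x ^ k mod p = h}"
  have inj: "inj_on (\<lambda>x. x * v mod p) ?F"
  proof
    fix x y assume "x \<in> ?F" "y \<in> ?F" "x * v mod p = y * v mod p"
    then have "[x * v = y * v] (mod p)" and xy: "x < p" "y < p"
      by (auto simp: cong_def reduced_residues_def)
    then have xy_uv: "[x * (u * v) = y * (u * v)] (mod p)"
      using cong_scalar_right[of "x * v" "y * v" p u] by (simp add: ac_simps)
    have x_uv: "[x * (u * v) = x] (mod p)" and y_uv: "[y * (u * v) = y] (mod p)"
      using cong_scalar_left[OF v] by simp_all
    have "[x = y] (mod p)"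
      using cong_trans[OF cong_trans[OF cong_sym[OF x_uv] xy_uv] y_uv] .
    then show "x = y" using xy by (rule cong_less_modulus_unique_nat)
  qed
  have sub: "(\<lambda>x. x * v mod p) ` ?F \<subseteq> {x. x < p \<and> x ^ k mod p = 1}"
  proof
    fix z assume "z \<in> (\<lambda>x. x * v mod p) ` ?F"
    then obtain x where "x ^ k mod p = h" and z: "z = x * v mod p" by auto
    then have "[x ^ k = u ^ k] (mod p)" using u by (simp add: cong_def)
    have "[(x * v mod p) ^ k = (x * v) ^ k] (mod p)"
      by (intro cong_pow) (simp add: cong_def)
    also have "[(x * v) ^ k = (u * v) ^ k] (mod p)"
      unfolding power_mult_distrib by (rule cong_scalar_right) fact
    also have "[(u * v) ^ k = 1] (mod p)" using cong_pow[OF v, of k] by simp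
    finally show "z \<in> {x. x < p \<and> x ^ k mod p = 1}"
      using p1 z by (simp add: cong_def)
  qed
  have "card ?F = card ((\<lambda>x. x * v mod p) ` ?F)" using card_image[OF inj] by simp
  also have "\<dots> \<le> card {x. x < p \<and> x ^ k mod p = 1}" by (rule card_mono[OF _ sub]) simp
  also have "\<dots> \<le> k" by (rule card_roots_of_unity_mod_prime_le) (use assms in auto)
  finally show ?thesis .
qed (metis card.empty le0)

lemma sum_norm_sq_red_exp_sum:
  assumes "q > 0"
  shows "(\<Sum>b<q. (cmod (red_exp_sum k q b))\<^sup>2)
    = q * card (SIGMA l:reduced_residues q. {m \<in> reduced_residues q. [l ^ k = m ^ k] (mod q)})"
proof -
  let ?U = "reduced_residues q"
  define D where "D = (\<lambda>(l, m). int (l ^ k) - int (m ^ k))"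
  have sq: "complex_of_real ((cmod (red_exp_sum k q b))\<^sup>2)
      = (\<Sum>z\<in>?U \<times> ?U. e (of_int (D z) * real b / real q))" for b
  proof -
    have "complex_of_real ((cmod (red_exp_sum k q b))\<^sup>2) = red_exp_sum k q b * cnj (red_exp_sum k q b)"
      by (rule complex_norm_square)
    also have "\<dots> = (\<Sum>(l, m)\<in>?U \<times> ?U. e (real (b * l ^ k) / real q) * e (- (real (b * m ^ k) / real q)))"
      unfolding red_exp_sum_def cnj_sum cnj_e sum_product sum.cartesian_product ..
    also have "\<dots> = (\<Sum>z\<in>?U \<times> ?U. e (of_int (D z) * real b / real q))"
    proof (rule sum.cong[OF refl], clarify)
      fix l m
      have "real (b * l ^ k) / real q + - (real (b * m ^ k) / real q) = of_int (D (l, m)) * real b / real q"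
        using assms unfolding D_def by (simp add: field_simps)
      then show "e (real (b * l ^ k) / real q) * e (- (real (b * m ^ k) / real q))
          = e (of_int (D (l, m)) * real b / real q)"
        by (simp only: e_add[symmetric])
    qed
    finally show ?thesis .
  qed
  have dvd_iff: "int q dvd D (l, m) \<longleftrightarrow> [l ^ k = m ^ k] (mod q)" for l m
    unfolding D_def case_prod_conv cong_int_iff[symmetric] cong_iff_dvd_diff ..
  have "complex_of_real (\<Sum>b<q. (cmod (red_exp_sum k q b))\<^sup>2)
      = (\<Sum>z\<in>?U \<times> ?U. \<Sum>b<q. e (of_int (D z) * real b / real q))"
    unfolding of_real_sum sq by (rule sum.swap)
  also have "\<dots> = (\<Sum>z\<in>?U \<times> ?U. if int q dvd D z then of_nat q else 0)"
    by (simp only: sum_e_linear[OF assms dvd_refl])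
  also have "\<dots> = complex_of_real (real q * real (card {z \<in> ?U \<times> ?U. int q dvd D z}))"
    by (simp add: sum.If_cases Int_def)
  also have "{z \<in> ?U \<times> ?U. int q dvd D z} = (SIGMA l:?U. {m \<in> ?U. [l ^ k = m ^ k] (mod q)})"
    using dvd_iff by auto
  finally show ?thesis by (simp only: of_real_eq_iff of_nat_mult)
qed

lemma card_power_residues_mult_norm_sq_le:
  assumes "q > 0" "coprime b q"
  shows "card ((\<lambda>u. u ^ k mod q) ` reduced_residues q) * (cmod (red_exp_sum k q b))\<^sup>2
    \<le> (\<Sum>c\<in>reduced_residues q. (cmod (red_exp_sum k q c))\<^sup>2)"
proof -
  let ?U = "reduced_residues q"
  let ?H = "(\<lambda>u. u ^ k mod q) ` ?U"
  let ?f = "\<lambda>h. b * h mod q"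
  have HU: "?H \<subseteq> ?U" using assms(1) by (auto simp: reduced_residues_def)
  have inj: "inj_on ?f ?H"
    using bij_betw_mult_mod_reduced_residues[OF assms] HU
    by (auto simp: bij_betw_def intro: inj_on_subset)
  have fU: "?f ` ?H \<subseteq> ?U"
    using bij_betw_mult_mod_reduced_residues[OF assms] HU by (auto simp: bij_betw_def)
  have same: "red_exp_sum k q (?f h) = red_exp_sum k q b" if "h \<in> ?H" for h
  proof -
    obtain u where u: "u \<in> ?U" "h = u ^ k mod q" using \<open>h \<in> ?H\<close> by auto
    have "[b * h mod q = b * u ^ k] (mod q)"
      unfolding u(2) by (simp add: cong_def mod_mult_right_eq)
    then have "red_exp_sum k q (?f h) = red_exp_sum k q (b * u ^ k)"
      by (rule red_exp_sum_cong[OF assms(1)])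
    also have "\<dots> = red_exp_sum k q b"
      using u assms(1) by (intro red_exp_sum_mult_unit_power) (auto simp: reduced_residues_def)
    finally show ?thesis .
  qed
  have "card ?H * (cmod (red_exp_sum k q b))\<^sup>2 = (\<Sum>h\<in>?H. (cmod (red_exp_sum k q (?f h)))\<^sup>2)"
    using same by simp
  also have "\<dots> = (\<Sum>c\<in>?f ` ?H. (cmod (red_exp_sum k q c))\<^sup>2)"
    by (rule sum.reindex[OF inj, symmetric, unfolded comp_def])
  also have "\<dots> \<le> (\<Sum>c\<in>?U. (cmod (red_exp_sum k q c))\<^sup>2)"
    by (rule sum_mono2[OF finite_reduced_residues fU]) simp
  finally show ?thesis .
qed

lemma reduced_residues_prime:
  assumes "prime p"
  shows "reduced_residues p = {0<..<p}"
proof -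
  have "coprime x p \<longleftrightarrow> 0 < x" if "x < p" for x
  proof
    assume "coprime x p"
    then show "0 < x" using assms by (cases "x = 0") auto
  next
    assume "0 < x"
    then have "\<not> p dvd x" using that by (auto dest: nat_dvd_not_less)
    then show "coprime x p"
      using coprime_commute[THEN iffD1, OF prime_imp_coprime[OF assms]] by blast
  qed
  then show ?thesis by (auto simp: reduced_residues_def)
qed

lemma card_reduced_residues_prime: "prime p \<Longrightarrow> card (reduced_residues p) = p - 1"
  by (simp add: reduced_residues_prime)

lemma card_power_congruent_pairs_le:
  assumes "prime p" "k \<ge> 1"
  shows "card (SIGMA l:reduced_residues p. {m \<in> reduced_residues p. [l ^ k = m ^ k] (mod p)})
    \<le> k * (p - 1)"
proof -
  let ?U = "reduced_residues p"
  have "card (SIGMA l:?U. {m \<in> ?U. [l ^ k = m ^ k] (mod p)})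
      = (\<Sum>l\<in>?U. card {m \<in> ?U. [l ^ k = m ^ k] (mod p)})"
    by (rule card_SigmaI) auto
  also have "\<dots> = (\<Sum>l\<in>?U. card {m \<in> ?U. m ^ k mod p = l ^ k mod p})"
    by (intro sum.cong refl arg_cong[where f = card]) (auto simp: cong_def)
  also have "\<dots> \<le> (\<Sum>l\<in>?U. k)" by (intro sum_mono card_power_mod_fiber_le assms)
  also have "\<dots> = k * (p - 1)" using card_reduced_residues_prime[OF assms(1)] by simp
  finally show ?thesis .
qed

lemma card_reduced_residues_prime_le_card_powers:
  assumes "prime p" "k \<ge> 1"
  shows "p - 1 \<le> k * card ((\<lambda>u. u ^ k mod p) ` reduced_residues p)"
proof -
  let ?U = "reduced_residues p"
  let ?H = "(\<lambda>u. u ^ k mod p) ` ?U"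
  have "?U = (\<Union>h\<in>?H. {m \<in> ?U. m ^ k mod p = h})" by auto
  then have "p - 1 = card (\<Union>h\<in>?H. {m \<in> ?U. m ^ k mod p = h})"
    using card_reduced_residues_prime[OF assms(1)] by (simp only:)
  also have "\<dots> \<le> (\<Sum>h\<in>?H. card {m \<in> ?U. m ^ k mod p = h})"
    by (rule card_UN_le) simp
  also have "\<dots> \<le> (\<Sum>h\<in>?H. k)" by (intro sum_mono card_power_mod_fiber_le assms)
  also have "\<dots> = k * card ?H" by simp
  finally show ?thesis .
qed

lemma norm_sq_red_exp_sum_prime_le:
  assumes p: "prime p" and k: "k \<ge> 1" and "coprime p b"
  shows "(cmod (red_exp_sum k p b))\<^sup>2 \<le> real k * (real p * real k - (real p - 1))"
proof -
  let ?U = "reduced_residues p"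
  let ?H = "(\<lambda>u. u ^ k mod p) ` ?U"
  let ?N = "SIGMA l:?U. {m \<in> ?U. [l ^ k = m ^ k] (mod p)}"
  define n where "n = p - 1"
  define Y where "Y = (cmod (red_exp_sum k p b))\<^sup>2"
  have p0: "p > 0" and n: "n > 0" "real n = real p - 1"
    using prime_gt_1_nat[OF p] by (auto simp: n_def of_nat_diff)
  have "{..<p} = insert 0 ?U" "0 \<notin> ?U"
    using p0 by (auto simp: reduced_residues_prime[OF p])
  then have "(\<Sum>c<p. (cmod (red_exp_sum k p c))\<^sup>2) = n\<^sup>2 + (\<Sum>c\<in>?U. (cmod (red_exp_sum k p c))\<^sup>2)"
    using card_reduced_residues_prime[OF p] by (simp add: red_exp_sum_def n_def)
  then have "(\<Sum>c\<in>?U. (cmod (red_exp_sum k p c))\<^sup>2) = p * card ?N - real n ^ 2"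
    using sum_norm_sq_red_exp_sum[OF p0, of k] by simp
  then have "card ?H * Y \<le> p * card ?N - real n ^ 2"
    using card_power_residues_mult_norm_sq_le[OF p0 coprime_commute[THEN iffD1, OF \<open>coprime p b\<close>], of k]
    unfolding Y_def by simp
  also have "\<dots> \<le> p * (k * n) - real n ^ 2"
    using card_power_congruent_pairs_le[OF p k] unfolding n_def
    by (intro diff_right_mono mult_left_mono) (simp_all flip: of_nat_mult)
  finally have HY: "card ?H * Y \<le> p * (k * n) - real n ^ 2" .
  have "n * Y \<le> k * card ?H * Y"
    using card_reduced_residues_prime_le_card_powers[OF p k] unfolding n_def
    by (intro mult_right_mono) (simp_all add: Y_def flip: of_nat_mult)
  also have "\<dots> \<le> k * (p * (k * n) - real n ^ 2)"
    using HY by (simp add: mult.assoc mult_left_mono)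
  also have "\<dots> = n * (real k * (real p * real k - real n))" by (simp add: algebra_simps power2_eq_square)
  finally have "Y \<le> real k * (real p * real k - real n)" using n(1) by (simp add: mult_le_cancel_left_pos)
  then show ?thesis using n(2) by (simp add: Y_def)
qed

lemma norm_red_exp_sum_prime_le:
  assumes "prime p" "k \<ge> 1" "coprime p b" "c \<ge> 0"
    and ineq: "real p powr (2 * \<theta>) * (real k * (real p * real k - (real p - 1))) \<le> (c * (real p - 1))\<^sup>2"
  shows "cmod (red_exp_sum k p b) \<le> c * real p powr (- \<theta>) * totient p"
proof (rule power2_le_imp_le)
  define P where "P = real p powr \<theta>"
  have "P > 0" using prime_gt_0_nat[OF assms(1)] by (simp add: P_def)
  moreover have "real p powr (2 * \<theta>) = P\<^sup>2"
    unfolding P_def power2_eq_square powr_add[symmetric] by simp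
  ultimately have P: "P > 0" "real p powr (2 * \<theta>) = P\<^sup>2" by auto
  have "(cmod (red_exp_sum k p b))\<^sup>2 \<le> real k * (real p * real k - (real p - 1))"
    by (rule norm_sq_red_exp_sum_prime_le[OF assms(1-3)])
  also have "\<dots> \<le> (c * (real p - 1))\<^sup>2 / P\<^sup>2"
    using ineq P by (simp add: pos_le_divide_eq mult.commute)
  also have "\<dots> = (c * real p powr (- \<theta>) * totient p)\<^sup>2"
    using prime_ge_1_nat[OF assms(1)]
    by (simp add: power_divide[symmetric] P_def powr_minus_divide totient_prime[OF assms(1)] of_nat_diff)
  finally show "(cmod (red_exp_sum k p b))\<^sup>2 \<le> (c * real p powr (- \<theta>) * totient p)\<^sup>2" .
qed (use assms(4) in simp)

lemma obtain_prime_power_factor: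
  fixes q :: nat
  assumes "q > 1"
  obtains p t m where "prime p" "t \<ge> 1" "q = p ^ t * m" "coprime p m" "m \<ge> 1" "m < q"
    "prime_factors q = insert p (prime_factors m)" "p \<notin> prime_factors m"
proof -
  have "q \<noteq> 1" using assms by simp
  then obtain p where p: "prime p" "p dvd q" using prime_factor_nat by blast
  define t where "t = multiplicity p q"
  obtain m where q: "q = p ^ t * m" and "\<not> p dvd m"
    using multiplicity_decompose'[of q p] assms prime_gt_1_nat[OF p(1)] unfolding t_def by auto
  have t: "t \<ge> 1"
    using p assms by (simp add: t_def prime_multiplicity_gt_zero_iff Suc_le_eq)
  have m: "m \<ge> 1" using q assms by (cases m) auto
  have "p ^ t > 1" using t prime_gt_1_nat[OF p(1)] by (intro one_less_power) auto
  then have "m < q" using m unfolding q by simp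
  have "prime_factors q = insert p (prime_factors m)" "p \<notin> prime_factors m"
    using p(1) t m \<open>\<not> p dvd m\<close> unfolding q
    by (auto simp: prime_factors_product prime_factorization_prime_power)
  from that[OF p(1) t q prime_imp_coprime[OF p(1) \<open>\<not> p dvd m\<close>] m \<open>m < q\<close> this]
  show ?thesis .
qed

lemma norm_red_exp_sum_le_prod_prime_factors:
  fixes c :: "nat \<Rightarrow> real"
  assumes k: "k \<ge> 1" and c_nonneg: "\<And>p. c p \<ge> 0"
    and prime_power: "\<And>p t b. prime p \<Longrightarrow> t \<ge> 1 \<Longrightarrow> coprime p b \<Longrightarrow>
        cmod (red_exp_sum k (p ^ t) b) \<le> c p * real (p ^ t) powr (- \<theta>) * totient (p ^ t)"
  shows "q \<ge> 1 \<Longrightarrow> coprime q b \<Longrightarrow>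
      cmod (red_exp_sum k q b) \<le> (\<Prod>p\<in>prime_factors q. c p) * real q powr (- \<theta>) * totient q"
proof (induction q arbitrary: b rule: less_induct)
  case (less q)
  show ?case
  proof (cases "q = 1")
    case True
    then show ?thesis using red_exp_sum_1[of k b] by simp
  next
    case False
    then have "q > 1" using less.prems(1) by simp
    then obtain p t m where p: "prime p" "t \<ge> 1" and q: "q = p ^ t * m"
      and "coprime p m" "m \<ge> 1" "m < q"
      and factors: "prime_factors q = insert p (prime_factors m)" "p \<notin> prime_factors m"
      by (rule obtain_prime_power_factor)
    have "coprime (p ^ t) m" "coprime m p" using \<open>coprime p m\<close> by (simp_all add: ac_simps)
    have "coprime p b" "coprime m b" using less.prems(2) p(2) unfolding q by simp_all
    have "cmod (red_exp_sum k q b)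
        = cmod (red_exp_sum k (p ^ t) (b * m ^ (k - 1))) * cmod (red_exp_sum k m (b * (p ^ t) ^ (k - 1)))"
      using one_le_power[OF prime_ge_1_nat[OF p(1)], of t] unfolding q
      by (simp only: red_exp_sum_mult_coprime[OF \<open>coprime (p ^ t) m\<close> _ \<open>m \<ge> 1\<close> k] norm_mult)
    also have "\<dots> \<le> (c p * real (p ^ t) powr (- \<theta>) * totient (p ^ t)) *
        ((\<Prod>p\<in>prime_factors m. c p) * real m powr (- \<theta>) * totient m)"
    proof (intro mult_mono)
      show "cmod (red_exp_sum k (p ^ t) (b * m ^ (k - 1))) \<le> c p * real (p ^ t) powr (- \<theta>) * totient (p ^ t)"
        using \<open>coprime p b\<close> \<open>coprime p m\<close> by (intro prime_power p) simp
      show "cmod (red_exp_sum k m (b * (p ^ t) ^ (k - 1)))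
          \<le> (\<Prod>p\<in>prime_factors m. c p) * real m powr (- \<theta>) * totient m"
        using \<open>coprime m b\<close> \<open>coprime m p\<close> by (intro less.IH \<open>m < q\<close> \<open>m \<ge> 1\<close>) simp
    qed (use c_nonneg in \<open>auto intro!: prod_nonneg\<close>)
    also have "\<dots> = (\<Prod>p\<in>prime_factors q. c p) * real q powr (- \<theta>) * totient q"
      unfolding factors(1) unfolding q using factors(2) \<open>coprime (p ^ t) m\<close>
      by (simp add: totient_mult_coprime powr_mult)
    finally show ?thesis .
  qed
qed

lemma prod_prime_factors_threshold_le:
  fixes q B :: nat and c :: real
  assumes "c \<ge> 1"
  shows "(\<Prod>p\<in>prime_factors q. if p \<le> B then c else 1) \<le> c ^ card {p. prime p \<and> p \<le> B}"
proof -
  have "(\<Prod>p\<in>prime_factors q. if p \<le> B then c else 1) = c ^ card {p \<in> prime_factors q. p \<le> B}"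
    by (simp add: prod.If_cases Int_def)
  also have "\<dots> \<le> c ^ card {p. prime p \<and> p \<le> B}"
  proof (intro power_increasing card_mono)
    show "finite {p. prime p \<and> p \<le> B}" by (rule finite_subset[of _ "{..B}"]) auto
  qed (use assms in auto)
  finally show ?thesis .
qed

lemma norm_red_exp_sum_le_threshold:
  fixes c :: real
  assumes "k \<ge> 1" "c \<ge> 1" "q \<ge> 1" "coprime q a"
    and prime_power: "\<And>p t b. prime p \<Longrightarrow> t \<ge> 1 \<Longrightarrow> coprime p b \<Longrightarrow>
        cmod (red_exp_sum k (p ^ t) b)
          \<le> (if p \<le> B then c else 1) * real (p ^ t) powr (- \<theta>) * totient (p ^ t)"
  shows "cmod (red_exp_sum k q a) \<le> c ^ card {p. prime p \<and> p \<le> B} * real q powr (- \<theta>) * totient q"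
proof -
  have "cmod (red_exp_sum k q a)
      \<le> (\<Prod>p\<in>prime_factors q. if p \<le> B then c else 1) * real q powr (- \<theta>) * totient q"
    using assms(2) by (intro norm_red_exp_sum_le_prod_prime_factors[OF assms(1) _ prime_power assms(3,4)]) auto
  also have "\<dots> \<le> c ^ card {p. prime p \<and> p \<le> B} * real q powr (- \<theta>) * totient q"
    using prod_prime_factors_threshold_le[OF assms(2)] by (intro mult_right_mono) auto
  finally show ?thesis .
qed

lemma powr_two_thirds_mult_le:
  fixes x :: real
  assumes "x \<ge> 5"
  shows "x powr (2/3) * x \<le> (x - 1)\<^sup>2"
proof (rule power_le_imp_le_base[of _ 2])
  have "x ^ 5 \<le> (5/4 * (x - 1)) ^ 5" using assms by (intro power_mono) auto
  also have "\<dots> = 3125/1024 * (x - 1) ^ 5" unfolding power_mult_distrib by (simp add: power_divide)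
  also have "\<dots> \<le> (x - 1) * (x - 1) ^ 5" using assms by (intro mult_right_mono) auto
  also have "\<dots> = ((x - 1)\<^sup>2) ^ 3" by (simp flip: power_mult power_Suc)
  finally have "x ^ 2 * x ^ 3 \<le> ((x - 1)\<^sup>2) ^ 3" by (simp flip: power_add)
  moreover have "(x powr (2/3) * x) ^ Suc 2 = x ^ 2 * x ^ 3"
    using assms by (simp add: power_mult_distrib powr_power)
  ultimately show "(x powr (2/3) * x) ^ Suc 2 \<le> ((x - 1)\<^sup>2) ^ Suc 2" by simp
qed simp

(* The hypothesis of norm_red_exp_sum_prime_le, in its exact shape, for c = k, c = 1 and k = 2. *)

lemma second_moment_ineq_small:
  fixes p :: real
  assumes "k \<ge> 3" "p \<ge> 5"
  shows "p powr (2 * (1 / real k)) * (real k * (p * real k - (p - 1))) \<le> (real k * (p - 1))\<^sup>2"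
proof -
  have "p * 1 \<le> p * real k" "real k * 1 \<le> real k * p"
    using assms by (intro mult_left_mono; simp)+
  then have nonneg: "0 \<le> real k * (p * real k - (p - 1))"
    and le_k: "real k * (p * real k - (p - 1)) \<le> real k ^ 2 * p"
    by (simp, simp add: power2_eq_square algebra_simps)
  have le_powr: "p powr (2 * (1 / real k)) \<le> p powr (2/3)"
    using assms by (intro powr_mono) (auto simp: field_simps)
  have "p powr (2 * (1 / real k)) * (real k * (p * real k - (p - 1)))
      \<le> p powr (2/3) * (real k ^ 2 * p)"
    using mult_mono[OF le_powr le_k _ nonneg] by simp
  also have "\<dots> \<le> real k ^ 2 * (p - 1)\<^sup>2"
    using mult_left_mono[OF powr_two_thirds_mult_le[OF assms(2)], of "real k ^ 2"]
    by (simp add: mult.left_commute)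
  finally show ?thesis by (simp add: power_mult_distrib)
qed

lemma second_moment_ineq_large:
  fixes p :: real
  assumes k: "k \<ge> 3" and p: "p > real k ^ 6"
  shows "p powr (2 * (1 / real k)) * (real k * (p * real k - (p - 1))) \<le> (1 * (p - 1))\<^sup>2"
proof -
  have "real k ^ 6 \<ge> 3 ^ 6" using k by (intro power_mono) auto
  then have p2: "p \<ge> 2" using p by simp
  define A where "A = p powr (2 * (1 / real k))"
  have A1: "A \<ge> 1" unfolding A_def using p2 by (intro ge_one_powr_ge_zero) auto
  have A2: "A \<le> p powr (2/3)" unfolding A_def using p2 k by (intro powr_mono) (auto simp: field_simps)
  have k2: "real k ^ 2 \<le> p powr (1/3)"
  proof (rule power_le_imp_le_base[of _ 2])
    have "(p powr (1/3)) ^ Suc 2 = p" using p2 by (simp add: powr_power)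
    then show "(real k ^ 2) ^ Suc 2 \<le> (p powr (1/3)) ^ Suc 2"
      using p by (simp flip: power_mult)
  qed simp
  have "A * real k ^ 2 * p \<le> p powr (2/3) * p powr (1/3) * p"
    using A2 k2 A1 p2 by (intro mult_right_mono mult_mono) auto
  also have "p powr (2/3) * p powr (1/3) = p" using p2 by (simp flip: powr_add)
  finally have "A * real k ^ 2 * p \<le> p * p" .
  moreover have "A * real k * (p - 1) \<ge> 1 * 3 * (p - 1)"
    using A1 k p2 by (intro mult_mono mult_right_mono) auto
  ultimately have "A * (real k * (p * real k - (p - 1))) \<le> p * p - 3 * (p - 1)"
    by (simp add: algebra_simps power2_eq_square)
  also have "\<dots> \<le> (1 * (p - 1))\<^sup>2" using p2 by (simp add: power2_eq_square algebra_simps)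
  finally show ?thesis unfolding A_def .
qed

lemma second_moment_ineq_quadratic:
  fixes p :: real
  assumes "p \<ge> 9"
  shows "p powr (2 * (1/4)) * (real 2 * (p * real 2 - (p - 1))) \<le> (1 * (p - 1))\<^sup>2"
proof -
  define m where "m = p - 9"
  have m: "m \<ge> 0" "p = m + 9" using assms by (simp_all add: m_def)
  have "((m + 8)\<^sup>2)\<^sup>2 - (m + 9) * (2 * (m + 10))\<^sup>2 = m ^ 4 + 28 * m ^ 3 + 268 * m\<^sup>2 + 928 * m + 496"
    by (simp add: power2_eq_square power3_eq_cube power4_eq_xxxx algebra_simps)
  also have "\<dots> \<ge> 0"
    using m by (intro add_nonneg_nonneg mult_nonneg_nonneg zero_le_power) auto
  finally have "p * (2 * (p + 1))\<^sup>2 \<le> ((p - 1)\<^sup>2)\<^sup>2"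
    unfolding m(2) by (simp add: add.commute)
  then have "(sqrt p * (2 * (p + 1)))\<^sup>2 \<le> ((p - 1)\<^sup>2)\<^sup>2"
    using assms by (simp add: power_mult_distrib)
  then have "sqrt p * (2 * (p + 1)) \<le> (p - 1)\<^sup>2"
    by (rule power2_le_imp_le) simp
  moreover have "p powr (2 * (1/4)) = sqrt p"
    using assms by (simp add: powr_half_sqrt)
  ultimately show ?thesis by simp
qed

lemma norm_red_exp_sum_prime_power_le_quadratic:
  assumes "prime p" "t \<ge> 1" "coprime p b"
  shows "cmod (red_exp_sum 2 (p ^ t) b)
    \<le> (if p \<le> 8 then 8 powr (1/4) else 1) * real (p ^ t) powr (- (1/4)) * totient (p ^ t)"
proof -
  have trivial: ?thesis if "p ^ t \<le> 8"
  proof -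
    have "p \<le> p ^ t" using prime_ge_1_nat[OF assms(1)] assms(2) by (intro self_le_power) auto
    moreover have "real (p ^ t) powr (1/4) \<le> 8 powr (1/4)"
      using that of_nat_le_iff[of "p ^ t" 8, where 'a = real] by (intro powr_mono2) auto
    ultimately show ?thesis
      using that prime_ge_1_nat[OF assms(1)] norm_red_exp_sum_le_trivial[of "p ^ t" "1/4" "8 powr (1/4)" 2 b]
      by simp
  qed
  consider "red_exp_sum 2 (p ^ t) b = 0" | "p ^ t \<le> 8" | "t = 1"
    using red_exp_sum_prime_power_cases[OF assms(1) _ assms(3,2), of 2] by auto
  then show ?thesis
  proof cases
    case 1
    then show ?thesis by simp
  next
    case 2
    then show ?thesis by (rule trivial)
  next
    case 3
    show ?thesis
    proof (cases "p \<le> 8")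
      case True
      with 3 show ?thesis by (intro trivial) simp
    next
      case False
      then have "real p \<ge> 9" by simp
      have "cmod (red_exp_sum 2 p b) \<le> 1 * real p powr (- (1/4)) * totient p"
        using norm_red_exp_sum_prime_le[OF assms(1) _ assms(3) _ second_moment_ineq_quadratic[OF \<open>real p \<ge> 9\<close>]]
        by simp
      then show ?thesis using 3 False by simp
    qed
  qed
qed

lemma norm_red_exp_sum_le_of_le_power_self:
  assumes "k \<ge> 1" "q \<ge> 1" "q \<le> k ^ k"
  shows "cmod (red_exp_sum k' q a) \<le> real k * real q powr (- (1 / real k)) * totient q"
proof (rule norm_red_exp_sum_le_trivial[OF assms(2)])
  have "real q powr (1 / real k) \<le> (real k ^ k) powr (1 / real k)"
    using assms(3) by (intro powr_mono2) (auto simp flip: of_nat_power)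
  also have "\<dots> = real k" using assms(1) by (simp add: powr_realpow[symmetric] powr_powr)
  finally show "real q powr (1 / real k) \<le> real k" .
qed

lemma norm_red_exp_sum_prime_gt_cube_le:
  assumes "k \<ge> 3" "prime p" "p > k ^ 3" "coprime p b"
  shows "cmod (red_exp_sum k p b)
    \<le> (if p \<le> k ^ 6 then real k else 1) * real p powr (- (1 / real k)) * totient p"
proof (cases "p \<le> k ^ 6")
  case True
  have "27 \<le> k ^ 3" using power_mono[of 3 k 3] assms(1) by simp
  then have "real p \<ge> 5" using assms(3) by simp
  then show ?thesis
    using True assms(1) norm_red_exp_sum_prime_le[OF assms(2) _ assms(4) _
        second_moment_ineq_small[OF assms(1) \<open>real p \<ge> 5\<close>]]
    by simp
next
  case False
  then have "real p > real k ^ 6" by (simp flip: of_nat_power)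
  then show ?thesis
    using False assms(1) norm_red_exp_sum_prime_le[OF assms(2) _ assms(4) _
        second_moment_ineq_large[OF assms(1) \<open>real p > real k ^ 6\<close>]]
    by simp
qed

lemma norm_red_exp_sum_prime_power_le:
  assumes "k \<ge> 3" "prime p" "t \<ge> 1" "coprime p b"
  shows "cmod (red_exp_sum k (p ^ t) b)
    \<le> (if p \<le> k ^ 6 then real k else 1) * real (p ^ t) powr (- (1 / real k)) * totient (p ^ t)"
proof -
  have trivial: ?thesis if "p ^ t \<le> k ^ 3"
  proof -
    have "p \<le> p ^ t" using prime_ge_1_nat[OF assms(2)] assms(3) by (intro self_le_power) auto
    moreover have "k ^ 3 \<le> k ^ 6" "k ^ 3 \<le> k ^ k" using assms(1) by (intro power_increasing; simp)+
    ultimately have "p \<le> k ^ 6" "p ^ t \<le> k ^ k" using that by linarith+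
    then show ?thesis
      using assms(1) prime_ge_1_nat[OF assms(2)] norm_red_exp_sum_le_of_le_power_self[of k "p ^ t" k b]
      by simp
  qed
  consider "red_exp_sum k (p ^ t) b = 0" | "p ^ t \<le> k ^ 3" | "t = 1"
    using red_exp_sum_prime_power_cases[OF assms(2) _ assms(4,3), of k] assms(1) by auto
  then show ?thesis
  proof cases
    case 1
    then show ?thesis by simp
  next
    case 2
    then show ?thesis by (rule trivial)
  next
    case 3
    show ?thesis
    proof (cases "p \<le> k ^ 3")
      case True
      with 3 show ?thesis by (intro trivial) simp
    next
      case False
      with 3 show ?thesis using norm_red_exp_sum_prime_gt_cube_le[OF assms(1,2) _ assms(4)] by simp
    qed
  qed
qed

lemma power_card_primes_le_8: "(8 powr (1/4) :: real) ^ card {p::nat. prime p \<and> p \<le> 8} \<le> 8"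
proof -
  have "{p::nat. prime p \<and> p \<le> 8} \<subseteq> {2, 3, 5, 7}"
  proof
    fix p :: nat assume "p \<in> {p. prime p \<and> p \<le> 8}"
    then have p: "prime p" "p \<le> 8" by auto
    have "p \<ge> 2" using prime_ge_2_nat[OF p(1)] .
    moreover have "p \<noteq> 4" "p \<noteq> 6" "p \<noteq> 8" using prime_odd_nat[OF p(1)] by auto
    ultimately show "p \<in> {2, 3, 5, 7}" using p(2) by simp linarith
  qed
  then have "card {p::nat. prime p \<and> p \<le> 8} \<le> card {2, 3, 5, 7::nat}"
    by (rule card_mono[rotated]) simp
  then have "(8 powr (1/4) :: real) ^ card {p::nat. prime p \<and> p \<le> 8} \<le> (8 powr (1/4)) ^ 4"
    by (intro power_increasing) (auto intro: ge_one_powr_ge_zero)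
  also have "\<dots> = 8" by (simp add: powr_power)
  finally show ?thesis .
qed

theorem proposition8p3:
  fixes q a :: nat
  assumes "q \<ge> 1" and "coprime q a"
  shows "cmod (S_star 2 q a) \<le> 8 * real q powr (-1/4) * real (totient q) \<and>
         (\<forall>k::nat. k > 2 \<longrightarrow>
           cmod (S_star k q a) \<le> C_const k * real q powr (-1 / real k) * real (totient q))"
proof (intro conjI allI impI)
  have "cmod (red_exp_sum 2 q a)
      \<le> (8 powr (1/4)) ^ card {p::nat. prime p \<and> p \<le> 8} * real q powr (- (1/4)) * totient q"
    by (rule norm_red_exp_sum_le_threshold[OF _ _ assms norm_red_exp_sum_prime_power_le_quadratic])
      (auto intro: ge_one_powr_ge_zero)
  also have "\<dots> \<le> 8 * real q powr (- (1/4)) * totient q"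
    using power_card_primes_le_8 by (intro mult_right_mono) auto
  finally show "cmod (S_star 2 q a) \<le> 8 * real q powr (-1/4) * real (totient q)"
    by (simp add: S_star_eq_red_exp_sum[OF assms(1)])
next
  fix k :: nat
  assume "k > 2"
  have "cmod (red_exp_sum k q a)
      \<le> real k ^ card {p. prime p \<and> p \<le> k ^ 6} * real q powr (- (1 / real k)) * totient q"
    using \<open>k > 2\<close>
    by (intro norm_red_exp_sum_le_threshold[OF _ _ assms norm_red_exp_sum_prime_power_le]) auto
  then show "cmod (S_star k q a) \<le> C_const k * real q powr (-1 / real k) * real (totient q)"
    by (simp add: C_const_def S_star_eq_red_exp_sum[OF assms(1)])
qed

end
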